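(* Let $S$ be the standard form on $\mathbb{R}^{2m}$ and let $F$ be a closed $S$-monotone set in $\mathbb{R}^{2m}$ such that $\psi_F(y)\ge\frac12S(y,y)$ for all $y\in\mathbb{R}^{2m}$. Then $H:=\{x:\psi_F(x)=\frac12S(x,x)\}\in\mathcal{M}(S)$, and for every $G\in\mathcal{M}(S)$: $$F\subset G\iff G=H\iff\psi_G=\psi_F\iff\psi_G\le\psi_F.$$
   Context: Standard form on $\mathbb{R}^{2m}$: $S((r,s),(u,v)):=\langle s,u\rangle+\langle r,v\rangle$, $r,s,u,v\in\mathbb{R}^m$. A set $G$ is $S$-monotone if $S(x-y,x-y)\ge0$ for $x,y\in G$; maximal if not a strict subset of another $S$-monotone set; $\mathcal{M}(S)$ is the family of maximal $S$-monotone sets. For a closed set $F\subset\mathbb{R}^{2m}$, $\psi_F(y):=\sup_{x\in F}(S(x,y)-\frac12S(x,x))$. *)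

theory Defs
  imports "HOL-Analysis.Analysis" "HOL-Library.Extended_Real"
begin

text \<open>Points of R^{2m} are pairs (r,s) with r,s in R^m; m is the cardinality of the
finite index type 'm.\<close>

definition stdS :: "((real^'m) \<times> (real^'m)) \<Rightarrow> ((real^'m) \<times> (real^'m)) \<Rightarrow> real" where
  "stdS x y = snd x \<bullet> fst y + fst x \<bullet> snd y"

definition S_monotone :: "((real^'m) \<times> (real^'m)) set \<Rightarrow> bool" where
  "S_monotone G \<longleftrightarrow> (\<forall>x\<in>G. \<forall>y\<in>G. stdS (x - y) (x - y) \<ge> 0)"

definition maximal_S_monotone :: "((real^'m) \<times> (real^'m)) set \<Rightarrow> bool" where
  "maximal_S_monotone G \<longleftrightarrow> S_monotone G \<and>
     \<not> (\<exists>G'. S_monotone G' \<and> G \<subset> G')"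

definition MS :: "((real^'m) \<times> (real^'m)) set set" where
  "MS = {G. maximal_S_monotone G}"

definition psi :: "((real^'m) \<times> (real^'m)) set \<Rightarrow> ((real^'m) \<times> (real^'m)) \<Rightarrow> ereal" where
  "psi F y = (SUP x\<in>F. ereal (stdS x y - stdS x x / 2))"

end

theory Submission
  imports Defs
begin

text \<open>Write q(y) = S(y,y)/2. A point y is S-monotonically related to every point of F
exactly when psi_F(y) \<le> q(y), so under psi_F \<ge> q the set H is the monotone polar of F,
which contains F because F is S-monotone. Since psi_F is convex, comparing psi_F with q along
the segment from a point h of H to an arbitrary y yields S(h,y) - q(h) \<le> psi_F(y): this gives
psi_H = psi_F, and for y in H it is the S-monotonicity of H. A maximal S-monotone set is its
own polar, and the polar reverses inclusions; the equivalences follow.\<close>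

lemma stdS_commute: "stdS x y = stdS y x"
  by (simp add: stdS_def inner_commute add.commute)

lemma stdS_add_left: "stdS (a + b) c = stdS a c + stdS b c"
  by (simp add: stdS_def inner_add_left algebra_simps)

lemma stdS_add_right: "stdS c (a + b) = stdS c a + stdS c b"
  by (simp add: stdS_def inner_add_right algebra_simps)

lemma stdS_diff_left: "stdS (a - b) c = stdS a c - stdS b c"
  by (simp add: stdS_def inner_diff_left algebra_simps)

lemma stdS_diff_right: "stdS c (a - b) = stdS c a - stdS c b"
  by (simp add: stdS_def inner_diff_right algebra_simps)

lemma stdS_scaleR_left: "stdS (t *\<^sub>R a) c = t * stdS a c"
  by (simp add: stdS_def algebra_simps)

lemma stdS_scaleR_right: "stdS c (t *\<^sub>R a) = t * stdS c a"
  by (simp add: stdS_def algebra_simps)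

lemmas stdS_bilinear = stdS_add_left stdS_add_right stdS_diff_left stdS_diff_right
  stdS_scaleR_left stdS_scaleR_right

lemma stdS_zero_left [simp]: "stdS 0 x = 0"
  by (simp add: stdS_def)

lemma stdS_diff_self: "stdS (x - y) (x - y) = stdS x x - 2 * stdS x y + stdS y y"
  using stdS_commute[of y x] by (simp add: stdS_bilinear)

lemma stdS_diff_self_commute: "stdS (x - y) (x - y) = stdS (y - x) (y - x)"
  using stdS_commute[of x y] by (simp add: stdS_diff_self)

lemma stdS_diff_self_nonneg_iff:
  "0 \<le> stdS (x - y) (x - y) \<longleftrightarrow> stdS x y - stdS x x / 2 \<le> stdS y y / 2"
  by (simp add: stdS_diff_self) linarith

definition S_monotone_polar :: "((real^'m) \<times> (real^'m)) set \<Rightarrow> ((real^'m) \<times> (real^'m)) set"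
  where "S_monotone_polar F = {y. \<forall>x\<in>F. 0 \<le> stdS (x - y) (x - y)}"

lemma S_monotone_iff_subset_polar: "S_monotone G \<longleftrightarrow> G \<subseteq> S_monotone_polar G"
  by (auto simp: S_monotone_def S_monotone_polar_def stdS_diff_self_commute)

lemma S_monotone_polar_antimono: "F \<subseteq> G \<Longrightarrow> S_monotone_polar G \<subseteq> S_monotone_polar F"
  by (auto simp: S_monotone_polar_def)

lemma maximal_S_monotone_eqI:
  assumes "maximal_S_monotone G" and "S_monotone G'" and "G \<subseteq> G'"
  shows "G' = G"
  using assms unfolding maximal_S_monotone_def by blast

lemma maximal_S_monotone_polar_eq:
  assumes max: "maximal_S_monotone G"
  shows "S_monotone_polar G = G"
proof
  have mono: "S_monotone G"
    using max by (simp add: maximal_S_monotone_def)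
  then show "G \<subseteq> S_monotone_polar G"
    by (simp add: S_monotone_iff_subset_polar)
  show "S_monotone_polar G \<subseteq> G"
  proof
    fix y assume "y \<in> S_monotone_polar G"
    then have "0 \<le> stdS (a - b) (a - b)" if "a \<in> insert y G" "b \<in> insert y G" for a b
      using that mono stdS_diff_self_commute[of a b]
      by (auto simp: S_monotone_def S_monotone_polar_def)
    then have "S_monotone (insert y G)"
      by (simp add: S_monotone_def)
    then show "y \<in> G"
      using maximal_S_monotone_eqI[OF max] by blast
  qed
qed

lemma psi_upper: "x \<in> F \<Longrightarrow> ereal (stdS x y - stdS x x / 2) \<le> psi F y"
  unfolding psi_def by (rule SUP_upper)

lemma psi_least: "(\<And>x. x \<in> F \<Longrightarrow> stdS x y - stdS x x / 2 \<le> c) \<Longrightarrow> psi F y \<le> ereal c"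
  unfolding psi_def by (auto intro: SUP_least)

lemma psi_mono: "F \<subseteq> G \<Longrightarrow> psi F y \<le> psi G y"
  unfolding psi_def by (rule SUP_subset_mono) simp_all

lemma psi_le_half_iff: "psi F y \<le> ereal (stdS y y / 2) \<longleftrightarrow> y \<in> S_monotone_polar F"
proof
  assume le: "psi F y \<le> ereal (stdS y y / 2)"
  have "0 \<le> stdS (x - y) (x - y)" if "x \<in> F" for x
    using order_trans[OF psi_upper[OF that] le] by (simp add: stdS_diff_self_nonneg_iff)
  then show "y \<in> S_monotone_polar F"
    by (simp add: S_monotone_polar_def)
next
  assume "y \<in> S_monotone_polar F"
  then show "psi F y \<le> ereal (stdS y y / 2)"
    by (intro psi_least) (simp add: S_monotone_polar_def stdS_diff_self_nonneg_iff)
qed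

lemma psi_convex_combination_le:
  assumes "0 \<le> t" "t \<le> 1" and "psi F h \<le> ereal \<alpha>" and "psi F y \<le> ereal \<beta>"
  shows "psi F ((1 - t) *\<^sub>R h + t *\<^sub>R y) \<le> ereal ((1 - t) * \<alpha> + t * \<beta>)"
proof (rule psi_least)
  fix x assume "x \<in> F"
  then have "stdS x h - stdS x x / 2 \<le> \<alpha>" "stdS x y - stdS x x / 2 \<le> \<beta>"
    using order_trans[OF psi_upper assms(3)] order_trans[OF psi_upper assms(4)] by auto
  then have "(1 - t) * (stdS x h - stdS x x / 2) + t * (stdS x y - stdS x x / 2)
      \<le> (1 - t) * \<alpha> + t * \<beta>"
    using assms(1,2) by (intro add_mono mult_left_mono) auto
  then show "stdS x ((1 - t) *\<^sub>R h + t *\<^sub>R y) - stdS x x / 2 \<le> (1 - t) * \<alpha> + t * \<beta>"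
    by (simp add: stdS_bilinear field_simps)
qed

lemma le_of_forall_pos_add_mult_le:
  fixes a c d :: real
  assumes "\<And>t. 0 < t \<Longrightarrow> t \<le> 1 \<Longrightarrow> c + t * d \<le> a"
  shows "c \<le> a"
proof (rule tendsto_upperbound)
  show "((\<lambda>t. c + t * d) \<longlongrightarrow> c) (at_right 0)"
    by (auto intro!: tendsto_eq_intros)
  show "\<forall>\<^sub>F t in at_right 0. c + t * d \<le> a"
    by (rule eventually_mono[OF eventually_at_right_real[of 0 1]]) (auto intro: assms)
qed simp

context
  fixes F :: "((real^'m) \<times> (real^'m)) set"
  assumes psi_ge_half: "\<And>y. psi F y \<ge> ereal (stdS y y / 2)"
begin

lemma psi_ge_of_mem_polar:
  assumes h: "h \<in> S_monotone_polar F"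
  shows "ereal (stdS h y - stdS h h / 2) \<le> psi F y"
proof (cases "psi F y")
  case PInf
  then show ?thesis by simp
next
  case MInf
  then show ?thesis using psi_ge_half[of y] by simp
next
  case (real a)
  define c where "c = stdS h y - stdS h h / 2"
  have "c + t * (stdS y y / 2 - c) \<le> a" if t: "0 < t" "t \<le> 1" for t
  proof -
    define z where "z = (1 - t) *\<^sub>R h + t *\<^sub>R y"
    have "ereal (stdS z z / 2) \<le> psi F z"
      by (rule psi_ge_half)
    also have "\<dots> \<le> ereal ((1 - t) * (stdS h h / 2) + t * a)"
      unfolding z_def using t h real
      by (intro psi_convex_combination_le) (auto simp: psi_le_half_iff)
    finally have "stdS z z / 2 \<le> (1 - t) * (stdS h h / 2) + t * a"
      by simp
    moreover have "stdS z z / 2 - (1 - t) * (stdS h h / 2) = t * (c + t * (stdS y y / 2 - c))"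
      using stdS_commute[of y h] by (simp add: z_def c_def stdS_bilinear field_simps)
    ultimately have "t * (c + t * (stdS y y / 2 - c)) \<le> t * a"
      by linarith
    with t show ?thesis
      by simp
  qed
  then have "c \<le> a"
    by (rule le_of_forall_pos_add_mult_le)
  with real show ?thesis
    by (simp add: c_def)
qed

lemma psi_eq_half_iff_mem_polar: "psi F y = ereal (stdS y y / 2) \<longleftrightarrow> y \<in> S_monotone_polar F"
  using psi_ge_half[of y] psi_le_half_iff[of F y] by (auto intro: order.antisym)

lemma S_monotone_polar_is_S_monotone: "S_monotone (S_monotone_polar F)"
  unfolding S_monotone_def
proof (intro ballI)
  fix h y assume h: "h \<in> S_monotone_polar F" and y: "y \<in> S_monotone_polar F"
  have "ereal (stdS h y - stdS h h / 2) \<le> psi F y"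
    by (rule psi_ge_of_mem_polar[OF h])
  also have "\<dots> = ereal (stdS y y / 2)"
    using y by (simp add: psi_eq_half_iff_mem_polar)
  finally show "0 \<le> stdS (h - y) (h - y)"
    by (simp add: stdS_diff_self_nonneg_iff)
qed

lemma maximal_S_monotone_polar:
  assumes "S_monotone F"
  shows "maximal_S_monotone (S_monotone_polar F)"
  unfolding maximal_S_monotone_def
proof (intro conjI notI S_monotone_polar_is_S_monotone)
  assume "\<exists>G. S_monotone G \<and> S_monotone_polar F \<subset> G"
  then obtain G where G: "S_monotone G" "S_monotone_polar F \<subset> G"
    by blast
  have "F \<subseteq> G"
    using assms G(2) by (auto simp: S_monotone_iff_subset_polar)
  have "G \<subseteq> S_monotone_polar G"
    using G(1) by (simp add: S_monotone_iff_subset_polar)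
  also have "\<dots> \<subseteq> S_monotone_polar F"
    by (rule S_monotone_polar_antimono[OF \<open>F \<subseteq> G\<close>])
  finally have "G \<subseteq> S_monotone_polar F" .
  with G(2) show False
    by blast
qed

lemma psi_S_monotone_polar:
  assumes "S_monotone F"
  shows "psi (S_monotone_polar F) = psi F"
proof
  fix y
  show "psi (S_monotone_polar F) y = psi F y"
  proof (rule order.antisym)
    show "psi (S_monotone_polar F) y \<le> psi F y"
      unfolding psi_def[of "S_monotone_polar F"]
      by (rule SUP_least) (rule psi_ge_of_mem_polar)
    show "psi F y \<le> psi (S_monotone_polar F) y"
      using assms by (intro psi_mono) (simp add: S_monotone_iff_subset_polar)
  qed
qed

lemma maximal_S_monotone_superset_eq_polar:
  assumes G: "maximal_S_monotone G" and "F \<subseteq> G"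
  shows "G = S_monotone_polar F"
proof -
  have "G \<subseteq> S_monotone_polar F"
    using S_monotone_polar_antimono[OF \<open>F \<subseteq> G\<close>] by (simp add: maximal_S_monotone_polar_eq[OF G])
  then show ?thesis
    using maximal_S_monotone_eqI[OF G S_monotone_polar_is_S_monotone] by simp
qed

lemma maximal_S_monotone_eq_polar_of_psi_le:
  assumes "S_monotone F" and G: "maximal_S_monotone G" and le: "\<And>y. psi G y \<le> psi F y"
  shows "G = S_monotone_polar F"
proof -
  have "S_monotone_polar F \<subseteq> G"
  proof
    fix y assume "y \<in> S_monotone_polar F"
    have "psi G y \<le> psi F y"
      by (rule le)
    also have "\<dots> = ereal (stdS y y / 2)"
      using \<open>y \<in> S_monotone_polar F\<close> by (simp add: psi_eq_half_iff_mem_polar)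
    finally show "y \<in> G"
      by (simp add: psi_le_half_iff maximal_S_monotone_polar_eq[OF G])
  qed
  with G maximal_S_monotone_polar[OF \<open>S_monotone F\<close>] show ?thesis
    by (simp add: maximal_S_monotone_eqI maximal_S_monotone_def)
qed

end

theorem lemma7:
  fixes F :: "((real^'m) \<times> (real^'m)) set"
  assumes "closed F" and "S_monotone F"
    and "\<And>y. psi F y \<ge> ereal (stdS y y / 2)"
  defines "H \<equiv> {x. psi F x = ereal (stdS x x / 2)}"
  shows "H \<in> MS \<and>
    (\<forall>G\<in>MS. (F \<subseteq> G \<longleftrightarrow> G = H) \<and> (G = H \<longleftrightarrow> psi G = psi F)
            \<and> (psi G = psi F \<longleftrightarrow> (\<forall>y. psi G y \<le> psi F y)))"
proof -
  have H: "H = S_monotone_polar F"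
    unfolding H_def using psi_eq_half_iff_mem_polar[OF assms(3)] by blast
  have "F \<subseteq> H"
    using assms(2) by (simp add: H S_monotone_iff_subset_polar)
  moreover have "maximal_S_monotone H" and "psi H = psi F"
    unfolding H using maximal_S_monotone_polar psi_S_monotone_polar assms(2,3) by blast+
  moreover have "G = H" if "maximal_S_monotone G" and "F \<subseteq> G" for G
    unfolding H using maximal_S_monotone_superset_eq_polar assms(3) that .
  moreover have "G = H" if "maximal_S_monotone G" and "\<forall>y. psi G y \<le> psi F y" for G
    unfolding H using maximal_S_monotone_eq_polar_of_psi_le assms(2,3) that by blast
  ultimately show ?thesis
    unfolding MS_def by (metis mem_Collect_eq order_refl)
qed

end
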